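(* Let $X$ be a real locally convex Hausdorff topological vector space with dual $X^*$. Let $D\subset X$ be nonempty and of the form $$D=\Big\{\sum_{i=1}^k\lambda_iu_i+\sum_{j=1}^\ell\mu_jv_j \ \Big|\ \lambda_i\ge 0\ \forall i,\ \sum_{i=1}^k\lambda_i=1,\ \mu_j\ge 0\ \forall j\Big\}+X_0,$$ where $u_1,\dots,u_k\in X$ ($k\ge1$), $v_1,\dots,v_\ell\in X$, and $X_0\subset X$ is a closed linear subspace. Let $x^*\in X^*$ be such that the problem $\min\{\langle x^*,x\rangle\mid x\in D\}$ has a solution, and let $S(x^* )$ be its solution set. Define $$I(x^* ):=\{i_0\in\{1,\dots,k\}\mid \langle x^*,u_{i_0}\rangle\le\langle x^*,u_i\rangle\ \forall i=1,\dots,k\},\qquad J(x^* ):=\{j_0\in\{1,\dots,\ell\}\mid \langle x^*,v_{j_0}\rangle=0\}.$$ Then $$S(x^* )=\Big\{\sum_{i\in I(x^* )}\lambda_iu_i+\sum_{j\in J(x^* )}\mu_jv_j\ \Big|\ \lambda_i\ge0\ \forall i\in I(x^* ),\ \sum_{i\in I(x^* )}\lambda_i=1,\ \mu_j\ge0\ \forall j\in J(x^* )\Big\}+X_0.$$ In particular, $S(x^* )$ is a generalized polyhedral convex set.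
   Context: $\langle x^*,x\rangle$ denotes the value of $x^*\in X^*$ at $x\in X$. A subset $C\subset X$ is a generalized polyhedral convex set if there exist $x_i^*\in X^*$, $\alpha_i\in\mathbb{R}$, $i=1,\dots,p$, and a closed affine subspace $L\subset X$ with $C=\{x\in L\mid \langle x_i^*,x\rangle\le\alpha_i,\ i=1,\dots,p\}$. A sum over an empty index set is $0$. *)

theory Defs
  imports "HOL-Analysis.Analysis"
begin

definition lc_tvs :: "'a::{real_vector, topological_space} itself \<Rightarrow> bool" where
  "lc_tvs _ \<longleftrightarrow>
     continuous_on UNIV (\<lambda>p::'a \<times> 'a. fst p + snd p) \<and>
     continuous_on UNIV (\<lambda>p::real \<times> 'a. scaleR (fst p) (snd p)) \<and>
     (\<forall>U::'a set. open U \<and> 0 \<in> U \<longrightarrow> (\<exists>V. open V \<and> convex V \<and> 0 \<in> V \<and> V \<subseteq> U))"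

definition dual_elem :: "('a::{real_vector, topological_space} \<Rightarrow> real) \<Rightarrow> bool" where
  "dual_elem f \<longleftrightarrow> linear f \<and> continuous_on UNIV f"

definition gen_polyhedral :: "'a::{real_vector, topological_space} set \<Rightarrow> bool" where
  "gen_polyhedral C \<longleftrightarrow>
     (\<exists>(p::nat) (xs :: nat \<Rightarrow> 'a \<Rightarrow> real) (\<alpha> :: nat \<Rightarrow> real) (L :: 'a set).
        (\<forall>i\<in>{1..p}. dual_elem (xs i)) \<and> closed L \<and> affine L \<and>
        C = {x \<in> L. \<forall>i\<in>{1..p}. xs i x \<le> \<alpha> i})"

definition gen_set :: "nat set \<Rightarrow> (nat \<Rightarrow> 'a::real_vector) \<Rightarrow> nat set \<Rightarrow> (nat \<Rightarrow> 'a) \<Rightarrow> 'a set \<Rightarrow> 'a set" where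
  "gen_set I u J v X0 =
     {(\<Sum>i\<in>I. lam i *\<^sub>R u i) + (\<Sum>j\<in>J. mu j *\<^sub>R v j) + z | lam mu z.
        (\<forall>i\<in>I. lam i \<ge> 0) \<and> (\<Sum>i\<in>I. lam i) = 1 \<and> (\<forall>j\<in>J. mu j \<ge> 0) \<and> z \<in> X0}"

end

theory Submission
  imports Defs
begin

text \<open>
  A linear functional \<open>f\<close> that attains its minimum on \<open>D\<close> vanishes on \<open>X\<^sub>0\<close> and is nonnegative on
  every \<open>v\<^sub>j\<close>. With \<open>m = min\<^sub>i f(u\<^sub>i)\<close>, the excess \<open>f(x) - m\<close> of a point
  \<open>x = \<Sum> \<lambda>\<^sub>i u\<^sub>i + \<Sum> \<mu>\<^sub>j v\<^sub>j + z\<close> of \<open>D\<close> is \<open>\<Sum> \<lambda>\<^sub>i (f(u\<^sub>i) - m) + \<Sum> \<mu>\<^sub>j f(v\<^sub>j)\<close>, a sum of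
  nonnegative terms; so the minimizers are exactly the points whose weights live on \<open>I(x\<^sup>*)\<close> and
  \<open>J(x\<^sup>*)\<close>, and the solution set is again of the form of \<open>D\<close>.

  Every such set is generalized polyhedral. Lifting \<open>u\<^sub>i\<close> to \<open>(u\<^sub>i, 1)\<close> and \<open>v\<^sub>j\<close> to \<open>(v\<^sub>j, 0)\<close> in
  \<open>X \<times> \<real>\<close> turns it into the slice at height \<open>1\<close> of the cone generated by finitely many vectors
  plus the closed subspace \<open>X\<^sub>0 \<times> {0}\<close>. Such a cone is the intersection of a closed subspace
  with finitely many closed half-spaces, by induction on the generators: a generator inside the
  subspace is absorbed by Fourier--Motzkin elimination, and one outside is split off by a
  continuous linear functional that vanishes on the subspace. That functional comes from the
  Hahn--Banach theorem applied to the Minkowski functional of a convex neighbourhood of \<open>0\<close>,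
  which is where local convexity enters.
\<close>

section \<open>Locally convex spaces\<close>

lemma continuous_on_add_lc:
  fixes f g :: "'c::topological_space \<Rightarrow> 'a::{real_vector,topological_space}"
  assumes "lc_tvs TYPE('a)" "continuous_on S f" "continuous_on S g"
  shows "continuous_on S (\<lambda>x. f x + g x)"
proof -
  have "continuous_on UNIV (\<lambda>p::'a \<times> 'a. fst p + snd p)"
    using assms(1) unfolding lc_tvs_def by blast
  from continuous_on_compose2[OF this continuous_on_Pair[OF assms(2,3)]] show ?thesis by simp
qed

lemma continuous_on_scaleR_lc:
  fixes f :: "'c::topological_space \<Rightarrow> real" and g :: "'c \<Rightarrow> 'a::{real_vector,topological_space}"
  assumes "lc_tvs TYPE('a)" "continuous_on S f" "continuous_on S g"
  shows "continuous_on S (\<lambda>x. f x *\<^sub>R g x)"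
proof -
  have "continuous_on UNIV (\<lambda>p::real \<times> 'a. fst p *\<^sub>R snd p)"
    using assms(1) unfolding lc_tvs_def by blast
  from continuous_on_compose2[OF this continuous_on_Pair[OF assms(2,3)]] show ?thesis by simp
qed

lemma continuous_on_diff_lc:
  fixes f g :: "'c::topological_space \<Rightarrow> 'a::{real_vector,topological_space}"
  assumes "lc_tvs TYPE('a)" "continuous_on S f" "continuous_on S g"
  shows "continuous_on S (\<lambda>x. f x - g x)"
  using continuous_on_add_lc[OF assms(1,2) continuous_on_scaleR_lc[OF assms(1) continuous_on_const assms(3)],
      of "-1"]
  by simp

lemma lc_tvs_real_normed_vector: "lc_tvs TYPE('a::real_normed_vector)"
proof -
  have "\<exists>V. open V \<and> convex V \<and> 0 \<in> V \<and> V \<subseteq> U" if "open U" "(0::'a) \<in> U" for U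
    using open_contains_ball_eq[of U] that by (meson centre_in_ball convex_ball open_ball)
  then show ?thesis
    unfolding lc_tvs_def by (auto intro!: continuous_intros)
qed

lemma lc_tvs_prod:
  assumes a: "lc_tvs TYPE('a::{real_vector,topological_space})"
    and b: "lc_tvs TYPE('b::{real_vector,topological_space})"
  shows "lc_tvs TYPE('a \<times> 'b)"
proof -
  have "continuous_on UNIV (\<lambda>p::('a \<times> 'b) \<times> ('a \<times> 'b).
          (fst (fst p) + fst (snd p), snd (fst p) + snd (snd p)))"
    by (intro continuous_on_Pair continuous_on_add_lc[OF a] continuous_on_add_lc[OF b] continuous_intros)
  moreover have "continuous_on UNIV (\<lambda>p::real \<times> ('a \<times> 'b).
          (fst p *\<^sub>R fst (snd p), fst p *\<^sub>R snd (snd p)))"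
    by (intro continuous_on_Pair continuous_on_scaleR_lc[OF a] continuous_on_scaleR_lc[OF b] continuous_intros)
  moreover have "\<exists>V. open V \<and> convex V \<and> 0 \<in> V \<and> V \<subseteq> U" if U: "open U" "(0::'a \<times> 'b) \<in> U" for U
  proof -
    obtain A B where AB: "open A" "open B" "(0::'a \<times> 'b) \<in> A \<times> B" "A \<times> B \<subseteq> U"
      using open_prod_elim[OF U] by blast
    obtain V where "open V" "convex V" "0 \<in> V" "V \<subseteq> A"
      using a AB unfolding lc_tvs_def by (auto simp: zero_prod_def)
    moreover obtain W where "open W" "convex W" "0 \<in> W" "W \<subseteq> B"
      using b AB unfolding lc_tvs_def by (auto simp: zero_prod_def)
    ultimately show ?thesis
      using AB(4) by (intro exI[of _ "V \<times> W"]) (auto simp: open_Times convex_Times zero_prod_def)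
  qed
  ultimately show ?thesis
    unfolding lc_tvs_def by (simp add: plus_prod_def scaleR_prod_def case_prod_beta)
qed

section \<open>Hahn--Banach extension\<close>

definition sublinear :: "('a::real_vector \<Rightarrow> real) \<Rightarrow> bool" where
  "sublinear p \<longleftrightarrow> (\<forall>x y. p (x + y) \<le> p x + p y) \<and> (\<forall>c x. 0 < c \<longrightarrow> p (c *\<^sub>R x) = c * p x)"

text \<open>A linear functional on a subspace of \<open>'a\<close> is represented by its graph, a subspace of
  \<open>'a \<times> real\<close> on which the second component is a function of the first.\<close>
definition dominated_graph :: "('a::real_vector \<Rightarrow> real) \<Rightarrow> ('a \<times> real) set \<Rightarrow> bool" where
  "dominated_graph p G \<longleftrightarrow> subspace G \<and> (\<forall>x a b. (x, a) \<in> G \<longrightarrow> (x, b) \<in> G \<longrightarrow> a = b)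
     \<and> (\<forall>x a. (x, a) \<in> G \<longrightarrow> a \<le> p x)"

lemma span_insert_subspace:
  "subspace S \<Longrightarrow> span (insert a S) = {x. \<exists>t. x - t *\<^sub>R a \<in> S}"
  by (simp add: span_insert span_eq_iff[THEN iffD2])

lemma dominated_graph_extension_value:
  assumes "sublinear p" "dominated_graph p M"
  obtains c where "\<And>y a. (y, a) \<in> M \<Longrightarrow> a - p (y - x0) \<le> c"
    and "\<And>z b. (z, b) \<in> M \<Longrightarrow> c \<le> p (z + x0) - b"
proof -
  have M: "subspace M" "\<And>x a. (x, a) \<in> M \<Longrightarrow> a \<le> p x"
    using assms(2) unfolding dominated_graph_def by blast+
  have sep: "a - p (y - x0) \<le> p (z + x0) - b" if "(y, a) \<in> M" "(z, b) \<in> M" for y a z b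
  proof -
    have "a + b \<le> p (y + z)"
      using M(2)[of "y + z" "a + b"] subspace_add[OF M(1) that] by simp
    also have "\<dots> \<le> p (y - x0) + p (z + x0)"
      using assms(1) unfolding sublinear_def by (metis diff_add_cancel add.assoc add.commute)
    finally show ?thesis by simp
  qed
  define S where "S = {a - p (y - x0) | y a. (y, a) \<in> M}"
  have "(0, 0) \<in> M" using subspace_0[OF M(1)] by (simp add: zero_prod_def)
  then have "S \<noteq> {}" "bdd_above S"
    unfolding S_def bdd_above_def using sep by blast+
  then show ?thesis
    by (intro that[of "Sup S"] cSup_upper cSup_least) (auto simp: S_def sep)
qed

text \<open>Dividing by \<open>|t|\<close> reduces the claim to one of the two bounds on \<open>c\<close>.\<close>
lemma extension_value_dominated:
  assumes p: "sublinear p" and M: "subspace M" "\<And>x a. (x, a) \<in> M \<Longrightarrow> a \<le> p x"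
    and c1: "\<And>y a. (y, a) \<in> M \<Longrightarrow> a - p (y - x0) \<le> c"
    and c2: "\<And>z b. (z, b) \<in> M \<Longrightarrow> c \<le> p (z + x0) - b"
    and t: "(x - t *\<^sub>R x0, a - t * c) \<in> M"
  shows "a \<le> p x"
proof -
  have hom: "p (s *\<^sub>R y) = s * p y" if "s > 0" for s y
    using p that unfolding sublinear_def by blast
  consider "t = 0" | "t > 0" | "t < 0" by linarith
  then show ?thesis
  proof cases
    case 1
    then show ?thesis using M(2)[OF t] by simp
  next
    case 2
    have "(inverse t *\<^sub>R (x - t *\<^sub>R x0), inverse t * (a - t * c)) \<in> M"
      using subspace_scale[OF M(1) t, of "inverse t"] by simp
    then have "c \<le> p (inverse t *\<^sub>R (x - t *\<^sub>R x0) + x0) - inverse t * (a - t * c)"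
      by (rule c2)
    also have "inverse t *\<^sub>R (x - t *\<^sub>R x0) + x0 = inverse t *\<^sub>R x"
      using 2 by (simp add: scaleR_diff_right)
    also have "p (inverse t *\<^sub>R x) - inverse t * (a - t * c) = inverse t * (p x - a) + c"
      using 2 hom[of "inverse t" x] by (simp add: field_simps)
    finally show ?thesis using 2 by (simp add: zero_le_mult_iff)
  next
    case 3
    have "(inverse (-t) *\<^sub>R (x - t *\<^sub>R x0), inverse (-t) * (a - t * c)) \<in> M"
      using subspace_scale[OF M(1) t, of "inverse (-t)"] by simp
    then have "inverse (-t) * (a - t * c) - p (inverse (-t) *\<^sub>R (x - t *\<^sub>R x0) - x0) \<le> c"
      by (rule c1)
    moreover have "inverse (-t) *\<^sub>R (x - t *\<^sub>R x0) - x0 = inverse (-t) *\<^sub>R x"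
      using 3 by (simp add: scaleR_diff_right)
    moreover have "inverse (-t) * (a - t * c) - p (inverse (-t) *\<^sub>R x) = inverse (-t) * (a - p x) + c"
      using 3 hom[of "inverse (-t)" x] by (simp add: field_simps)
    ultimately show ?thesis using 3 by (simp add: zero_le_mult_iff)
  qed
qed

lemma dominated_graph_extend:
  assumes p: "sublinear p" and M: "dominated_graph p M" and x0: "\<nexists>a. (x0, a) \<in> M"
  shows "\<exists>M'. dominated_graph p M' \<and> M \<subset> M'"
proof -
  have Ms: "subspace M" and Mf: "\<And>x a b. (x, a) \<in> M \<Longrightarrow> (x, b) \<in> M \<Longrightarrow> a = b"
    and Mp: "\<And>x a. (x, a) \<in> M \<Longrightarrow> a \<le> p x"
    using M unfolding dominated_graph_def by blast+
  obtain c where c1: "\<And>y a. (y, a) \<in> M \<Longrightarrow> a - p (y - x0) \<le> c"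
    and c2: "\<And>z b. (z, b) \<in> M \<Longrightarrow> c \<le> p (z + x0) - b"
    using dominated_graph_extension_value[OF p M] by blast
  define M' where "M' = span (insert (x0, c) M)"
  have M'_iff: "(x, a) \<in> M' \<longleftrightarrow> (\<exists>t. (x - t *\<^sub>R x0, a - t * c) \<in> M)" for x a
    unfolding M'_def span_insert_subspace[OF Ms] by simp
  have "subspace M'" unfolding M'_def by (rule subspace_span)
  moreover have "a = b" if xa: "(x, a) \<in> M'" and xb: "(x, b) \<in> M'" for x a b
  proof -
    obtain t s where t: "(x - t *\<^sub>R x0, a - t * c) \<in> M" and s: "(x - s *\<^sub>R x0, b - s * c) \<in> M"
      using xa xb M'_iff by blast
    have diff: "((s - t) *\<^sub>R x0, (a - t * c) - (b - s * c)) \<in> M"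
      using subspace_diff[OF Ms t s] by (simp add: algebra_simps)
    have "t = s"
    proof (rule ccontr)
      assume "t \<noteq> s"
      then have "(x0, inverse (s - t) * ((a - t * c) - (b - s * c))) \<in> M"
        using subspace_scale[OF Ms diff, of "inverse (s - t)"] by simp
      then show False using x0 by blast
    qed
    then show "a = b" using Mf t s by fastforce
  qed
  moreover have "a \<le> p x" if "(x, a) \<in> M'" for x a
    using that M'_iff extension_value_dominated[OF p Ms Mp c1 c2] by blast
  moreover have "M \<subset> M'"
  proof -
    have "insert (x0, c) M \<subseteq> M'" unfolding M'_def by (rule span_superset)
    then show ?thesis using x0 by blast
  qed
  ultimately show ?thesis unfolding dominated_graph_def by blast
qed

lemma dominated_graph_chain_Union:
  assumes C: "C \<noteq> {}" "subset.chain {G. dominated_graph p G} C"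
  shows "dominated_graph p (\<Union>C)"
proof -
  have sub: "\<And>G. G \<in> C \<Longrightarrow> subspace G"
    and single: "\<And>G x a b. G \<in> C \<Longrightarrow> (x, a) \<in> G \<Longrightarrow> (x, b) \<in> G \<Longrightarrow> a = b"
    and le: "\<And>G x a. G \<in> C \<Longrightarrow> (x, a) \<in> G \<Longrightarrow> a \<le> p x"
    using C(2) unfolding subset_chain_def dominated_graph_def by blast+
  have common: "\<exists>Z\<in>C. q \<in> Z \<and> r \<in> Z" if qr: "q \<in> \<Union>C" "r \<in> \<Union>C" for q r
  proof -
    obtain X Y where "X \<in> C" "Y \<in> C" "q \<in> X" "r \<in> Y" using qr by blast
    moreover have "X \<subseteq> Y \<or> Y \<subseteq> X" using C(2) calculation(1,2) unfolding subset_chain_def by blast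
    ultimately show ?thesis by blast
  qed
  have "subspace (\<Union>C)"
    unfolding subspace_def
  proof (intro conjI ballI allI)
    obtain G where "G \<in> C" using C(1) by blast
    then show "0 \<in> \<Union>C" using sub[of G] subspace_0 by blast
  next
    fix q r assume "q \<in> \<Union>C" "r \<in> \<Union>C"
    then obtain Z where "Z \<in> C" "q \<in> Z" "r \<in> Z" using common by blast
    then show "q + r \<in> \<Union>C" using sub[of Z] subspace_add by blast
  next
    fix c q assume "q \<in> \<Union>C"
    then obtain Z where "Z \<in> C" "q \<in> Z" by blast
    then show "c *\<^sub>R q \<in> \<Union>C" using sub[of Z] subspace_scale by blast
  qed
  moreover have "a = b" if "(x, a) \<in> \<Union>C" "(x, b) \<in> \<Union>C" for x a b
    using common[OF that] single by blast
  moreover have "a \<le> p x" if "(x, a) \<in> \<Union>C" for x a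
    using that le by blast
  ultimately show ?thesis unfolding dominated_graph_def by blast
qed

lemma hahn_banach_graph:
  assumes p: "sublinear p" and G0: "dominated_graph p G0"
  obtains F where "linear F" "\<And>x a. (x, a) \<in> G0 \<Longrightarrow> F x = a" "\<And>x. F x \<le> p x"
proof -
  define A where "A = {G. dominated_graph p G \<and> G0 \<subseteq> G}"
  have "\<Union>C \<in> A" if "C \<noteq> {}" "subset.chain A C" for C
  proof -
    have "subset.chain {G. dominated_graph p G} C"
      using that(2) unfolding A_def subset_chain_def by blast
    moreover have "G0 \<subseteq> \<Union>C" using that unfolding A_def subset_chain_def by blast
    ultimately show ?thesis using dominated_graph_chain_Union[OF that(1)] unfolding A_def by blast
  qed
  moreover have "G0 \<in> A" using G0 unfolding A_def by blast
  ultimately obtain M where MA: "M \<in> A" and Mmax: "\<And>X. X \<in> A \<Longrightarrow> M \<subseteq> X \<Longrightarrow> X = M"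
    using subset_Zorn_nonempty[of A] by blast
  have M: "dominated_graph p M" "G0 \<subseteq> M" using MA unfolding A_def by blast+
  have Ms: "subspace M" and Mf: "\<And>x a b. (x, a) \<in> M \<Longrightarrow> (x, b) \<in> M \<Longrightarrow> a = b"
    and Mp: "\<And>x a. (x, a) \<in> M \<Longrightarrow> a \<le> p x"
    using M(1) unfolding dominated_graph_def by blast+
  have total: "\<exists>a. (x, a) \<in> M" for x
  proof (rule ccontr)
    assume "\<nexists>a. (x, a) \<in> M"
    then obtain M' where "dominated_graph p M'" "M \<subset> M'"
      using dominated_graph_extend[OF p M(1)] by blast
    then show False using Mmax[of M'] M(2) unfolding A_def by blast
  qed
  define F where "F x = (THE a. (x, a) \<in> M)" for x
  have FM: "(x, F x) \<in> M" for x
    using total[of x] Mf unfolding F_def by (metis theI)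
  have F_eq: "F x = a" if "(x, a) \<in> M" for x a using Mf[OF that FM] by simp
  have "linear F"
  proof (rule linearI)
    show "F (x + y) = F x + F y" for x y
      using F_eq subspace_add[OF Ms FM FM] by simp
    show "F (c *\<^sub>R x) = c *\<^sub>R F x" for c x
      using F_eq subspace_scale[OF Ms FM, of c] by simp
  qed
  then show ?thesis using that F_eq M(2) Mp FM by blast
qed

section \<open>Separating a point from a closed subspace\<close>

definition minkowski_functional :: "'a::real_vector set \<Rightarrow> 'a \<Rightarrow> real" where
  "minkowski_functional V x = Inf {t. 0 < t \<and> inverse t *\<^sub>R x \<in> V}"

lemma absorbing_open_lc:
  fixes V :: "'a::{real_vector,topological_space} set"
  assumes "lc_tvs TYPE('a)" "open V" "0 \<in> V"
  shows "\<exists>t>0. inverse t *\<^sub>R x \<in> V"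
proof -
  have "continuous_on UNIV (\<lambda>s::real. s *\<^sub>R x)"
    by (rule continuous_on_scaleR_lc[OF assms(1) continuous_on_id continuous_on_const])
  then have "open ((\<lambda>s::real. s *\<^sub>R x) -` V)"
    using assms(2) by (simp add: continuous_on_open_vimage)
  moreover have "(0::real) \<in> (\<lambda>s. s *\<^sub>R x) -` V" using assms(3) by simp
  ultimately obtain e where "e > 0" "ball 0 e \<subseteq> (\<lambda>s::real. s *\<^sub>R x) -` V"
    using open_contains_ball by blast
  then have "(e / 2) *\<^sub>R x \<in> V" by (auto simp: subset_iff)
  then show ?thesis using \<open>e > 0\<close> by (intro exI[of _ "inverse (e / 2)"]) simp
qed

context
  fixes V :: "'a::real_vector set"
  assumes V: "convex V" "0 \<in> V" and absorbing: "\<And>x. \<exists>t>0. inverse t *\<^sub>R x \<in> V"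
begin

private lemma gauge_set_nonempty: "{t. 0 < t \<and> inverse t *\<^sub>R x \<in> V} \<noteq> {}"
  using absorbing by blast

private lemma gauge_set_bdd: "bdd_below {t. 0 < t \<and> inverse t *\<^sub>R x \<in> V}"
  by (rule bdd_belowI[of _ 0]) simp

lemma minkowski_functional_nonneg: "0 \<le> minkowski_functional V x"
  unfolding minkowski_functional_def by (rule cInf_greatest[OF gauge_set_nonempty]) simp

lemma minkowski_functional_le: "0 < t \<Longrightarrow> inverse t *\<^sub>R x \<in> V \<Longrightarrow> minkowski_functional V x \<le> t"
  unfolding minkowski_functional_def by (rule cInf_lower[OF _ gauge_set_bdd]) simp

lemma minkowski_functional_le_1: "x \<in> V \<Longrightarrow> minkowski_functional V x \<le> 1"
  using minkowski_functional_le[of 1 x] by simp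

text \<open>Convexity and \<open>0 \<in> V\<close> make \<open>V\<close> star-shaped at \<open>0\<close>, so every radius above the infimum works.\<close>
lemma minkowski_functional_less_imp_mem:
  assumes "minkowski_functional V x < r"
  shows "inverse r *\<^sub>R x \<in> V"
proof -
  obtain t where t: "0 < t" "inverse t *\<^sub>R x \<in> V" "t < r"
    using assms cInf_less_iff[OF gauge_set_nonempty gauge_set_bdd]
    unfolding minkowski_functional_def by blast
  then have "(t / r) *\<^sub>R (inverse t *\<^sub>R x) + (1 - t / r) *\<^sub>R 0 \<in> V"
    by (intro convexD[OF V(1) t(2) V(2)]) simp_all
  moreover have "(t / r) *\<^sub>R (inverse t *\<^sub>R x) + (1 - t / r) *\<^sub>R 0 = inverse r *\<^sub>R x"
    using t by (simp add: inverse_eq_divide)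
  ultimately show ?thesis by (simp only:)
qed

lemma sublinear_minkowski_functional: "sublinear (minkowski_functional V)"
proof -
  let ?p = "minkowski_functional V"
  have add: "?p (x + y) \<le> ?p x + ?p y" for x y
  proof (rule field_le_epsilon)
    fix e :: real assume e: "e > 0"
    define r s where "r = ?p x + e / 2" and "s = ?p y + e / 2"
    have rs: "r > 0" "s > 0"
      using minkowski_functional_nonneg[of x] minkowski_functional_nonneg[of y] e
      unfolding r_def s_def by linarith+
    have "inverse r *\<^sub>R x \<in> V" "inverse s *\<^sub>R y \<in> V"
      using e by (auto intro!: minkowski_functional_less_imp_mem simp: r_def s_def)
    then have "(r / (r + s)) *\<^sub>R (inverse r *\<^sub>R x) + (s / (r + s)) *\<^sub>R (inverse s *\<^sub>R y) \<in> V"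
      using rs by (intro convexD[OF V(1)]) (simp_all add: add_divide_distrib[symmetric])
    moreover have "(r / (r + s)) *\<^sub>R (inverse r *\<^sub>R x) + (s / (r + s)) *\<^sub>R (inverse s *\<^sub>R y)
        = inverse (r + s) *\<^sub>R (x + y)"
      using rs by (simp add: scaleR_add_right field_simps)
    ultimately have "?p (x + y) \<le> r + s"
      using rs by (intro minkowski_functional_le) simp_all
    then show "?p (x + y) \<le> ?p x + ?p y + e" unfolding r_def s_def by simp
  qed
  have hom_le: "?p (c *\<^sub>R x) \<le> c * ?p x" if c: "c > 0" for c x
  proof (rule field_le_epsilon)
    fix e :: real assume e: "e > 0"
    define r where "r = ?p x + e / c"
    have r: "r > 0" using minkowski_functional_nonneg[of x] e c unfolding r_def
      by (simp add: add_nonneg_pos)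
    have "inverse r *\<^sub>R x \<in> V"
      using e c by (intro minkowski_functional_less_imp_mem) (simp add: r_def)
    moreover have "inverse (c * r) *\<^sub>R (c *\<^sub>R x) = inverse r *\<^sub>R x" using c by simp
    ultimately have "inverse (c * r) *\<^sub>R (c *\<^sub>R x) \<in> V" by (simp only:)
    then have "?p (c *\<^sub>R x) \<le> c * r"
      using c r by (intro minkowski_functional_le) simp_all
    also have "c * r = c * ?p x + e" using c unfolding r_def by (simp add: distrib_left)
    finally show "?p (c *\<^sub>R x) \<le> c * ?p x + e" .
  qed
  have "?p (c *\<^sub>R x) = c * ?p x" if c: "c > 0" for c x
  proof -
    have "?p x \<le> inverse c * ?p (c *\<^sub>R x)"
      using hom_le[of "inverse c" "c *\<^sub>R x"] c by simp
    then show ?thesis using hom_le[OF c, of x] c by (simp add: field_simps)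
  qed
  with add show ?thesis unfolding sublinear_def by blast
qed

end

lemma continuous_on_linear_bounded_nbhd:
  fixes F :: "'a::{real_vector,topological_space} \<Rightarrow> real"
  assumes lc: "lc_tvs TYPE('a)" and F: "linear F"
    and W: "open W" "0 \<in> W" and bound: "\<And>y. y \<in> W \<Longrightarrow> \<bar>F y\<bar> \<le> 1"
  shows "continuous_on UNIV F"
  unfolding continuous_on_topological
proof (intro ballI allI impI)
  fix x B assume B: "open B" "F x \<in> B"
  obtain e where e: "e > 0" "ball (F x) e \<subseteq> B" using B open_contains_ball by blast
  define A where "A = (\<lambda>y. (2 / e) *\<^sub>R (y - x)) -` W"
  have "continuous_on UNIV (\<lambda>y. (2 / e) *\<^sub>R (y - x))"
    by (intro continuous_on_scaleR_lc[OF lc] continuous_on_diff_lc[OF lc] continuous_intros)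
  then have "open A" unfolding A_def using W(1) by (simp add: continuous_on_open_vimage)
  moreover have "x \<in> A" unfolding A_def using W(2) by simp
  moreover have "F y \<in> B" if "y \<in> A" for y
  proof -
    have "F y - F x = e / 2 * F ((2 / e) *\<^sub>R (y - x))"
      using e(1) by (simp add: linear_scale[OF F] linear_diff[OF F])
    then have "\<bar>F y - F x\<bar> = \<bar>e / 2 * F ((2 / e) *\<^sub>R (y - x))\<bar>" by (simp only:)
    also have "\<dots> \<le> e / 2"
      using bound[of "(2 / e) *\<^sub>R (y - x)"] that e(1) unfolding A_def by (simp add: abs_mult mult_left_le)
    finally have "\<bar>F y - F x\<bar> < e" using e(1) by linarith
    then show ?thesis using e(2) by (auto simp: dist_real_def abs_minus_commute)
  qed
  ultimately show "\<exists>A. open A \<and> x \<in> A \<and> (\<forall>y\<in>UNIV. y \<in> A \<longrightarrow> F y \<in> B)" by blast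
qed

text \<open>The graph of the functional \<open>m + a w \<mapsto> a\<close> on \<open>M + \<real> w\<close>.\<close>
lemma dominated_graph_coefficient:
  fixes p :: "'a::real_vector \<Rightarrow> real"
  assumes p: "sublinear p" "\<And>x. 0 \<le> p x" and M: "subspace M" and w: "w \<notin> M"
    and p_ge_1: "\<And>m. m \<in> M \<Longrightarrow> 1 \<le> p (w + m)"
  shows "dominated_graph p {(x, a). x - a *\<^sub>R w \<in> M}"
  unfolding dominated_graph_def
proof (intro conjI allI impI)
  have "subspace (M \<times> {0::real})" by (rule subspace_Times[OF M subspace_single_0])
  then have "{(x, a). x - a *\<^sub>R w \<in> M} = span (insert (w, 1) (M \<times> {0}))"
    using span_insert_subspace[of "M \<times> {0::real}" "(w, 1)"] by auto
  then show "subspace {(x, a). x - a *\<^sub>R w \<in> M}" by (simp add: subspace_span)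
next
  fix x a b assume "(x, a) \<in> {(x, a). x - a *\<^sub>R w \<in> M}" "(x, b) \<in> {(x, a). x - a *\<^sub>R w \<in> M}"
  then have "x - a *\<^sub>R w \<in> M" "x - b *\<^sub>R w \<in> M" by simp_all
  then have "(x - a *\<^sub>R w) - (x - b *\<^sub>R w) \<in> M" by (rule subspace_diff[OF M])
  moreover have "(x - a *\<^sub>R w) - (x - b *\<^sub>R w) = (b - a) *\<^sub>R w" by (simp add: algebra_simps)
  ultimately have ba: "(b - a) *\<^sub>R w \<in> M" by simp
  show "a = b"
  proof (rule ccontr)
    assume "a \<noteq> b"
    then have "inverse (b - a) *\<^sub>R ((b - a) *\<^sub>R w) = w" by simp
    then show False using subspace_scale[OF M ba, of "inverse (b - a)"] w by simp
  qed
next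
  fix x a assume "(x, a) \<in> {(x, a). x - a *\<^sub>R w \<in> M}"
  then have m: "x - a *\<^sub>R w \<in> M" by simp
  show "a \<le> p x"
  proof (cases "a > 0")
    case True
    have "x = a *\<^sub>R (w + inverse a *\<^sub>R (x - a *\<^sub>R w))" using True by (simp add: scaleR_diff_right)
    then have "p x = a * p (w + inverse a *\<^sub>R (x - a *\<^sub>R w))"
      using p(1) True unfolding sublinear_def by metis
    moreover have "1 \<le> p (w + inverse a *\<^sub>R (x - a *\<^sub>R w))"
      using p_ge_1 subspace_scale[OF M m] by blast
    ultimately show ?thesis using True by simp
  next
    case False
    then show ?thesis using p(2)[of x] by simp
  qed
qed

text \<open>Hahn--Banach applied to the Minkowski functional of a convex neighbourhood of \<open>0\<close> that avoids
  \<open>w + M\<close>; the resulting functional is bounded on a neighbourhood of \<open>0\<close>, hence continuous.\<close>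
lemma dual_elem_separating_closed_subspace:
  fixes M :: "'a::{real_vector,topological_space} set"
  assumes lc: "lc_tvs TYPE('a)" and M: "subspace M" "closed M" and w: "w \<notin> M"
  obtains h where "dual_elem h" "\<And>m. m \<in> M \<Longrightarrow> h m = 0" "h w = 1"
proof -
  define U where "U = (\<lambda>x. x - w) -` (- M)"
  have "continuous_on UNIV (\<lambda>x. x - w)"
    by (intro continuous_on_diff_lc[OF lc] continuous_intros)
  then have "open U" unfolding U_def using M(2) by (simp add: continuous_on_open_vimage open_Compl)
  moreover have "0 \<in> U" unfolding U_def using w subspace_neg[OF M(1), of "-w"] by auto
  ultimately obtain V where V: "open V" "convex V" "0 \<in> V" "V \<subseteq> U"
    using lc unfolding lc_tvs_def by blast
  have absorbing: "\<And>x. \<exists>t>0. inverse t *\<^sub>R x \<in> V" by (rule absorbing_open_lc[OF lc V(1,3)])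
  define p where "p = minkowski_functional V"
  have p: "sublinear p" unfolding p_def by (rule sublinear_minkowski_functional[OF V(2,3) absorbing])
  have p_nonneg: "0 \<le> p x" for x
    unfolding p_def by (rule minkowski_functional_nonneg[OF V(2,3) absorbing])
  have p_ge_1: "1 \<le> p (w + m)" if "m \<in> M" for m
  proof (rule ccontr)
    assume "\<not> 1 \<le> p (w + m)"
    then have "w + m \<in> V"
      using minkowski_functional_less_imp_mem[OF V(2,3) absorbing, of "w + m" 1] by (simp add: p_def)
    then show False using V(4) that unfolding U_def by auto
  qed
  obtain F where F: "linear F" "\<And>x a. x - a *\<^sub>R w \<in> M \<Longrightarrow> F x = a" "\<And>x. F x \<le> p x"
    using hahn_banach_graph[OF p dominated_graph_coefficient[OF p p_nonneg M(1) w p_ge_1]] by auto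
  define W where "W = V \<inter> uminus -` V"
  have "continuous_on UNIV (\<lambda>x::'a. - x)"
    using continuous_on_scaleR_lc[OF lc continuous_on_const continuous_on_id, of UNIV "-1"] by simp
  then have "open W" unfolding W_def using V(1) by (simp add: continuous_on_open_vimage open_Int)
  moreover have "0 \<in> W" unfolding W_def using V(3) by simp
  moreover have "\<bar>F y\<bar> \<le> 1" if "y \<in> W" for y
  proof -
    have "F y \<le> 1" "F (- y) \<le> 1"
      using F(3) minkowski_functional_le_1[OF V(2,3) absorbing] that
      unfolding W_def p_def by (meson IntD1 IntD2 order_trans vimageE)+
    then show ?thesis using linear_neg[OF F(1), of y] by linarith
  qed
  ultimately have "continuous_on UNIV F" by (rule continuous_on_linear_bounded_nbhd[OF lc F(1)])
  moreover have "F m = 0" if "m \<in> M" for m using F(2)[of m 0] that by simp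
  moreover have "F w = 1" using F(2)[of w 1] subspace_0[OF M(1)] by simp
  ultimately show ?thesis using that F(1) unfolding dual_elem_def by blast
qed

section \<open>Polyhedral cones\<close>

definition polyhedral_cone :: "'a::{real_vector,topological_space} set \<Rightarrow> bool" where
  "polyhedral_cone C \<longleftrightarrow> (\<exists>G L. finite G \<and> (\<forall>g\<in>G. dual_elem g) \<and> closed L \<and> subspace L \<and>
     C = {x \<in> L. \<forall>g\<in>G. g x \<le> 0})"

definition add_ray :: "'a::real_vector set \<Rightarrow> 'a \<Rightarrow> 'a set" where
  "add_ray K w = {x + t *\<^sub>R w | x t. x \<in> K \<and> 0 \<le> t}"

text \<open>The result of eliminating \<open>t \<ge> 0\<close> from the system \<open>g (x - t w) \<le> 0\<close>, \<open>g \<in> G\<close>.\<close>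
definition fourier_motzkin :: "('a::real_vector \<Rightarrow> real) set \<Rightarrow> 'a \<Rightarrow> ('a \<Rightarrow> real) set" where
  "fourier_motzkin G w = {g \<in> G. g w \<le> 0} \<union>
     {\<lambda>x. g w * g' x - g' w * g x | g g'. g \<in> G \<and> g' \<in> G \<and> 0 < g w \<and> g' w < 0}"

lemma dual_elem_linear_combination:
  assumes "dual_elem g" "dual_elem g'"
  shows "dual_elem (\<lambda>x. a * g x + b * g' x)"
proof -
  have l: "linear g" "linear g'" and c: "continuous_on UNIV g" "continuous_on UNIV g'"
    using assms unfolding dual_elem_def by blast+
  have "linear (\<lambda>x. a * g x + b * g' x)"
    by (rule linearI) (simp_all add: linear_add[OF l(1)] linear_add[OF l(2)]
        linear_scale[OF l(1)] linear_scale[OF l(2)] algebra_simps)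
  moreover have "continuous_on UNIV (\<lambda>x. a * g x + b * g' x)"
    by (intro continuous_intros c)
  ultimately show ?thesis unfolding dual_elem_def by blast
qed

lemma dual_elem_compose:
  assumes "dual_elem g" "linear \<phi>" "continuous_on UNIV \<phi>"
  shows "dual_elem (g \<circ> \<phi>)"
  using assms linear_compose[of \<phi> g] continuous_on_compose[of UNIV \<phi> g]
  unfolding dual_elem_def by (auto intro: continuous_on_subset)

lemma finite_fourier_motzkin: "finite G \<Longrightarrow> finite (fourier_motzkin G w)"
proof -
  assume G: "finite G"
  have "{\<lambda>x. g w * g' x - g' w * g x | g g'. g \<in> G \<and> g' \<in> G \<and> 0 < g w \<and> g' w < 0}
      \<subseteq> (\<lambda>(g, g'). \<lambda>x. g w * g' x - g' w * g x) ` (G \<times> G)"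
    by auto
  moreover have "finite ((\<lambda>(g, g'). \<lambda>x. g w * g' x - g' w * g x) ` (G \<times> G))" using G by simp
  ultimately show ?thesis
    unfolding fourier_motzkin_def using G by (simp add: finite_subset)
qed

lemma dual_elem_fourier_motzkin:
  assumes "\<forall>g\<in>G. dual_elem g"
  shows "\<forall>g\<in>fourier_motzkin G w. dual_elem g"
proof
  fix g assume "g \<in> fourier_motzkin G w"
  then consider "g \<in> G" | g1 g2 where "g1 \<in> G" "g2 \<in> G" "g = (\<lambda>x. g1 w * g2 x - g2 w * g1 x)"
    unfolding fourier_motzkin_def by blast
  then show "dual_elem g"
  proof cases
    case 2
    then show ?thesis using assms dual_elem_linear_combination[of g2 g1 "g1 w" "- g2 w"] by simp
  qed (use assms in blast)
qed

lemma add_ray_subset_fourier_motzkin: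
  assumes L: "subspace L" "w \<in> L" and G: "\<And>g. g \<in> G \<Longrightarrow> linear g"
  shows "add_ray {x \<in> L. \<forall>g\<in>G. g x \<le> 0} w \<subseteq> {x \<in> L. \<forall>g\<in>fourier_motzkin G w. g x \<le> 0}"
proof
  fix z assume "z \<in> add_ray {x \<in> L. \<forall>g\<in>G. g x \<le> 0} w"
  then obtain x t where z: "z = x + t *\<^sub>R w" "x \<in> L" "\<And>g. g \<in> G \<Longrightarrow> g x \<le> 0" "0 \<le> t"
    unfolding add_ray_def by blast
  have gz: "g z = g x + t * g w" if "g \<in> G" for g
    using z(1) G[OF that] by (simp add: linear_add linear_scale)
  have "z \<in> L" using z(1,2) L by (simp add: subspace_add subspace_scale)
  moreover have "g z \<le> 0" if "g \<in> fourier_motzkin G w" for g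
    using that unfolding fourier_motzkin_def
  proof (elim UnE CollectE exE conjE)
    assume "g \<in> G" "g w \<le> 0"
    then show ?thesis using gz[of g] z(3)[of g] mult_nonneg_nonpos[OF z(4)] by fastforce
  next
    fix g1 g2 assume g: "g = (\<lambda>x. g1 w * g2 x - g2 w * g1 x)" "g1 \<in> G" "g2 \<in> G" "0 < g1 w" "g2 w < 0"
    then have "g z = g1 w * g2 x - g2 w * g1 x" using gz[of g1] gz[of g2] by (simp add: algebra_simps)
    also have "\<dots> \<le> 0"
      using mult_nonneg_nonpos[of "g1 w" "g2 x"] mult_nonpos_nonpos[of "g2 w" "g1 x"] g z(3)[of g1] z(3)[of g2]
      by linarith
    finally show ?thesis .
  qed
  ultimately show "z \<in> {x \<in> L. \<forall>g\<in>fourier_motzkin G w. g x \<le> 0}" by blast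
qed

text \<open>The step length \<open>t\<close> is the largest ratio \<open>g x / g w\<close> over the constraints increasing along \<open>w\<close>.\<close>
lemma fourier_motzkin_subset_add_ray:
  assumes L: "subspace L" "w \<in> L" and G: "finite G" "\<And>g. g \<in> G \<Longrightarrow> linear g"
  shows "{x \<in> L. \<forall>g\<in>fourier_motzkin G w. g x \<le> 0} \<subseteq> add_ray {x \<in> L. \<forall>g\<in>G. g x \<le> 0} w"
proof
  fix x assume "x \<in> {x \<in> L. \<forall>g\<in>fourier_motzkin G w. g x \<le> 0}"
  then have x: "x \<in> L" "\<And>g. g \<in> fourier_motzkin G w \<Longrightarrow> g x \<le> 0" by auto
  define S where "S = insert 0 ((\<lambda>g. g x / g w) ` {g \<in> G. 0 < g w})"
  define t where "t = Max S"
  have "finite S" "S \<noteq> {}" unfolding S_def using G(1) by simp_all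
  then have S: "t \<in> S" "\<And>s. s \<in> S \<Longrightarrow> s \<le> t"
    unfolding t_def by (simp_all add: Max_in)
  have bound: "g x \<le> t * g w" if g: "g \<in> G" for g
  proof -
    consider "0 < g w" | "g w = 0" | "g w < 0" by linarith
    then show ?thesis
    proof cases
      case 1
      then have "g x / g w \<le> t" using S(2) g unfolding S_def by blast
      then show ?thesis using 1 by (simp add: pos_divide_le_eq)
    next
      case 2
      then show ?thesis using x(2)[of g] g unfolding fourier_motzkin_def by simp
    next
      case 3
      have gx: "g x \<le> 0" using x(2)[of g] g 3 unfolding fourier_motzkin_def by simp
      show ?thesis
      proof (cases "t = 0")
        case True
        then show ?thesis using gx by simp
      next
        case False
        then obtain g0 where g0: "g0 \<in> G" "0 < g0 w" "t = g0 x / g0 w" using S(1) unfolding S_def by auto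
        have "g0 w * g x - g w * g0 x \<le> 0"
          using x(2)[of "\<lambda>x. g0 w * g x - g w * g0 x"] g0 g 3 unfolding fourier_motzkin_def by blast
        then have "g x \<le> (g0 x * g w) / g0 w" using g0(2) by (simp add: pos_le_divide_eq algebra_simps)
        then show ?thesis using g0(3) by simp
      qed
    qed
  qed
  have "x - t *\<^sub>R w \<in> {x \<in> L. \<forall>g\<in>G. g x \<le> 0}"
    using x(1) L bound G(2) by (simp add: subspace_diff subspace_scale linear_diff linear_scale)
  moreover have "0 \<le> t" using S(2) unfolding S_def by simp
  ultimately show "x \<in> add_ray {x \<in> L. \<forall>g\<in>G. g x \<le> 0} w"
    unfolding add_ray_def by (intro CollectI exI[of _ "x - t *\<^sub>R w"] exI[of _ t]) simp
qed

lemma add_ray_eq_fourier_motzkin: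
  assumes "subspace L" "w \<in> L" "finite G" "\<And>g. g \<in> G \<Longrightarrow> linear g"
  shows "add_ray {x \<in> L. \<forall>g\<in>G. g x \<le> 0} w = {x \<in> L. \<forall>g\<in>fourier_motzkin G w. g x \<le> 0}"
  using add_ray_subset_fourier_motzkin[OF assms(1,2,4)] fourier_motzkin_subset_add_ray[OF assms]
  by (rule subset_antisym)

lemma add_ray_eq_projection:
  assumes h: "linear h" "\<And>x. x \<in> K \<Longrightarrow> h x = 0" "h w = 1"
  shows "add_ray K w = {x. x - h x *\<^sub>R w \<in> K \<and> 0 \<le> h x}"
proof (intro set_eqI iffI)
  fix z assume "z \<in> add_ray K w"
  then obtain x t where z: "z = x + t *\<^sub>R w" "x \<in> K" "0 \<le> t" unfolding add_ray_def by blast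
  then have "h z = t" using h by (simp add: linear_add linear_scale)
  then show "z \<in> {x. x - h x *\<^sub>R w \<in> K \<and> 0 \<le> h x}" using z by simp
next
  fix z assume "z \<in> {x. x - h x *\<^sub>R w \<in> K \<and> 0 \<le> h x}"
  then show "z \<in> add_ray K w"
    unfolding add_ray_def by (intro CollectI exI[of _ "z - h z *\<^sub>R w"] exI[of _ "h z"]) simp
qed

lemma polyhedral_cone_add_ray_in_subspace:
  assumes G: "finite G" "\<forall>g\<in>G. dual_elem g" and L: "closed L" "subspace L" and w: "w \<in> L"
  shows "polyhedral_cone (add_ray {x \<in> L. \<forall>g\<in>G. g x \<le> 0} w)"
proof -
  have "linear g" if "g \<in> G" for g using G(2) that unfolding dual_elem_def by blast
  then have "add_ray {x \<in> L. \<forall>g\<in>G. g x \<le> 0} w = {x \<in> L. \<forall>g\<in>fourier_motzkin G w. g x \<le> 0}"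
    by (rule add_ray_eq_fourier_motzkin[OF L(2) w G(1)])
  then show ?thesis
    unfolding polyhedral_cone_def
    using finite_fourier_motzkin[OF G(1)] dual_elem_fourier_motzkin[OF G(2)] L
    by (intro exI[of _ "fourier_motzkin G w"] exI[of _ L]) simp
qed

text \<open>A functional \<open>h\<close> with \<open>h = 0\<close> on \<open>L\<close> and \<open>h w = 1\<close> splits off the direction \<open>w\<close>: the
  projection \<open>\<phi> x = x - h x w\<close> onto a complement of \<open>w\<close> turns the ray into the constraint \<open>h \<ge> 0\<close>.\<close>
lemma polyhedral_cone_add_ray_transversal:
  fixes L :: "'a::{real_vector,topological_space} set"
  assumes lc: "lc_tvs TYPE('a)" and G: "finite G" "\<forall>g\<in>G. dual_elem g"
    and L: "closed L" "subspace L" and w: "w \<notin> L"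
  shows "polyhedral_cone (add_ray {x \<in> L. \<forall>g\<in>G. g x \<le> 0} w)"
proof -
  obtain h where h: "dual_elem h" "\<And>m. m \<in> L \<Longrightarrow> h m = 0" "h w = 1"
    using dual_elem_separating_closed_subspace[OF lc L(2,1) w] by blast
  have hl: "linear h" and hc: "continuous_on UNIV h" using h(1) unfolding dual_elem_def by blast+
  define \<phi> where "\<phi> x = x - h x *\<^sub>R w" for x
  have \<phi>l: "linear \<phi>"
    unfolding \<phi>_def by (rule linearI) (simp_all add: linear_add[OF hl] linear_scale[OF hl] algebra_simps)
  have \<phi>c: "continuous_on UNIV \<phi>"
    unfolding \<phi>_def by (intro continuous_on_diff_lc[OF lc] continuous_on_scaleR_lc[OF lc] continuous_intros hc)
  define G' where "G' = (\<lambda>g. g \<circ> \<phi>) ` G \<union> {\<lambda>x. - h x}"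
  have "finite G'" unfolding G'_def using G(1) by simp
  moreover have "dual_elem g" if "g \<in> G'" for g
  proof -
    have "dual_elem (\<lambda>x. - h x)"
      using dual_elem_linear_combination[OF h(1) h(1), of "-1" 0] by simp
    then show ?thesis
      using \<open>g \<in> G'\<close> G(2) dual_elem_compose[OF _ \<phi>l \<phi>c] unfolding G'_def by blast
  qed
  moreover have "closed (\<phi> -` L)" by (rule closed_vimage[OF L(1) \<phi>c])
  moreover have "subspace (\<phi> -` L)" by (rule linear_subspace_vimage[OF \<phi>l L(2)])
  moreover have "add_ray {x \<in> L. \<forall>g\<in>G. g x \<le> 0} w = {x \<in> \<phi> -` L. \<forall>g\<in>G'. g x \<le> 0}"
  proof -
    have "add_ray {x \<in> L. \<forall>g\<in>G. g x \<le> 0} w = {x. \<phi> x \<in> {x \<in> L. \<forall>g\<in>G. g x \<le> 0} \<and> 0 \<le> h x}"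
      unfolding \<phi>_def by (rule add_ray_eq_projection[OF hl _ h(3)]) (simp add: h(2))
    then show ?thesis unfolding G'_def by auto
  qed
  ultimately show ?thesis
    unfolding polyhedral_cone_def by (intro exI[of _ G'] exI[of _ "\<phi> -` L"]) simp
qed

lemma polyhedral_cone_add_ray:
  fixes K :: "'a::{real_vector,topological_space} set"
  assumes lc: "lc_tvs TYPE('a)" and K: "polyhedral_cone K"
  shows "polyhedral_cone (add_ray K w)"
proof -
  obtain G L where G: "finite G" "\<forall>g\<in>G. dual_elem g" and L: "closed L" "subspace L"
    and K_eq: "K = {x \<in> L. \<forall>g\<in>G. g x \<le> 0}"
    using K unfolding polyhedral_cone_def by blast
  show ?thesis
    unfolding K_eq
    using polyhedral_cone_add_ray_in_subspace[OF G L] polyhedral_cone_add_ray_transversal[OF lc G L]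
    by blast
qed

definition generated_cone :: "'a::real_vector set \<Rightarrow> 'i set \<Rightarrow> ('i \<Rightarrow> 'a) \<Rightarrow> 'a set" where
  "generated_cone Z N w = {(\<Sum>m\<in>N. c m *\<^sub>R w m) + z | c z. (\<forall>m\<in>N. 0 \<le> c m) \<and> z \<in> Z}"

lemma generated_cone_empty [simp]: "generated_cone Z {} w = Z"
  unfolding generated_cone_def by auto

lemma generated_cone_insert:
  assumes "finite N" "m \<notin> N"
  shows "generated_cone Z (insert m N) w = add_ray (generated_cone Z N w) (w m)"
proof (intro set_eqI iffI)
  fix y assume "y \<in> generated_cone Z (insert m N) w"
  then obtain c z where y: "y = (\<Sum>n\<in>insert m N. c n *\<^sub>R w n) + z" "\<forall>n\<in>insert m N. 0 \<le> c n" "z \<in> Z"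
    unfolding generated_cone_def by blast
  then have "y = ((\<Sum>n\<in>N. c n *\<^sub>R w n) + z) + c m *\<^sub>R w m"
    using assms by (simp add: algebra_simps)
  moreover have "(\<Sum>n\<in>N. c n *\<^sub>R w n) + z \<in> generated_cone Z N w"
    unfolding generated_cone_def using y by blast
  ultimately show "y \<in> add_ray (generated_cone Z N w) (w m)"
    unfolding add_ray_def using y(2) by blast
next
  fix y assume "y \<in> add_ray (generated_cone Z N w) (w m)"
  then obtain c z t where y: "y = ((\<Sum>n\<in>N. c n *\<^sub>R w n) + z) + t *\<^sub>R w m"
    "\<forall>n\<in>N. 0 \<le> c n" "z \<in> Z" "0 \<le> t"
    unfolding add_ray_def generated_cone_def by blast
  have "(\<Sum>n\<in>N. (c(m := t)) n *\<^sub>R w n) = (\<Sum>n\<in>N. c n *\<^sub>R w n)"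
    using assms(2) by (intro sum.cong) auto
  then have "y = (\<Sum>n\<in>insert m N. (c(m := t)) n *\<^sub>R w n) + z"
    using y(1) assms by (simp add: algebra_simps)
  then show "y \<in> generated_cone Z (insert m N) w"
    unfolding generated_cone_def using y(2-4) by (intro CollectI exI[of _ "c(m := t)"] exI[of _ z]) simp
qed

lemma polyhedral_cone_closed_subspace:
  "closed Z \<Longrightarrow> subspace Z \<Longrightarrow> polyhedral_cone Z"
  unfolding polyhedral_cone_def by (intro exI[of _ "{}"] exI[of _ Z]) simp

lemma polyhedral_cone_generated_cone:
  fixes Z :: "'a::{real_vector,topological_space} set"
  assumes "lc_tvs TYPE('a)" "finite N" "closed Z" "subspace Z"
  shows "polyhedral_cone (generated_cone Z N w)"
  using assms(2)
proof (induction N rule: finite_induct)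
  case empty
  then show ?case using polyhedral_cone_closed_subspace[OF assms(3,4)] by simp
next
  case (insert m N)
  then show ?case
    unfolding generated_cone_insert[OF insert(1,2)] using polyhedral_cone_add_ray[OF assms(1)] by blast
qed

section \<open>The sets \<open>gen_set\<close> are generalized polyhedral\<close>

lemma gen_setI:
  assumes "\<forall>i\<in>I. 0 \<le> lam i" "(\<Sum>i\<in>I. lam i) = 1" "\<forall>j\<in>J. 0 \<le> mu j" "z \<in> X0"
  shows "(\<Sum>i\<in>I. lam i *\<^sub>R u i) + (\<Sum>j\<in>J. mu j *\<^sub>R v j) + z \<in> gen_set I u J v X0"
  using assms unfolding gen_set_def by blast

lemma gen_setE:
  assumes "x \<in> gen_set I u J v X0"
  obtains lam mu z where "x = (\<Sum>i\<in>I. lam i *\<^sub>R u i) + (\<Sum>j\<in>J. mu j *\<^sub>R v j) + z"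
    "\<forall>i\<in>I. 0 \<le> lam i" "(\<Sum>i\<in>I. lam i) = 1" "\<forall>j\<in>J. 0 \<le> mu j" "z \<in> X0"
  using assms unfolding gen_set_def by blast

lemma gen_set_eq_slice:
  fixes u v :: "nat \<Rightarrow> 'a::real_vector"
  assumes I: "finite I" and J: "finite J"
  shows "gen_set I u J v X0 =
    {x. (x, 1) \<in> generated_cone (X0 \<times> {0}) (I <+> J) (case_sum (\<lambda>i. (u i, 1::real)) (\<lambda>j. (v j, 0)))}"
proof -
  let ?w = "case_sum (\<lambda>i. (u i, 1::real)) (\<lambda>j. (v j, 0))"
  have sum_w: "(\<Sum>m\<in>I <+> J. c m *\<^sub>R ?w m) =
      ((\<Sum>i\<in>I. c (Inl i) *\<^sub>R u i) + (\<Sum>j\<in>J. c (Inr j) *\<^sub>R v j), \<Sum>i\<in>I. c (Inl i))" for c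
    using I J by (simp add: sum.Plus prod_eq_iff fst_sum snd_sum)
  show ?thesis
  proof (intro set_eqI iffI)
    fix x assume "x \<in> gen_set I u J v X0"
    then obtain lam mu z where x: "x = (\<Sum>i\<in>I. lam i *\<^sub>R u i) + (\<Sum>j\<in>J. mu j *\<^sub>R v j) + z"
      "\<forall>i\<in>I. 0 \<le> lam i" "(\<Sum>i\<in>I. lam i) = 1" "\<forall>j\<in>J. 0 \<le> mu j" "z \<in> X0"
      by (rule gen_setE)
    then have "(x, 1) = (\<Sum>m\<in>I <+> J. case_sum lam mu m *\<^sub>R ?w m) + (z, 0)"
      by (simp add: sum_w)
    moreover have "\<forall>m\<in>I <+> J. 0 \<le> case_sum lam mu m" using x(2,4) by auto
    ultimately show "x \<in> {x. (x, 1) \<in> generated_cone (X0 \<times> {0}) (I <+> J) ?w}"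
      unfolding generated_cone_def using x(5) by blast
  next
    fix x assume "x \<in> {x. (x, 1) \<in> generated_cone (X0 \<times> {0}) (I <+> J) ?w}"
    then obtain c z where c: "(x, 1) = (\<Sum>m\<in>I <+> J. c m *\<^sub>R ?w m) + (z, 0)"
      "\<forall>m\<in>I <+> J. 0 \<le> c m" "z \<in> X0"
      unfolding generated_cone_def by blast
    then have "x = (\<Sum>i\<in>I. c (Inl i) *\<^sub>R u i) + (\<Sum>j\<in>J. c (Inr j) *\<^sub>R v j) + z"
      "(\<Sum>i\<in>I. c (Inl i)) = 1"
      by (simp_all add: sum_w)
    moreover have "\<forall>i\<in>I. 0 \<le> c (Inl i)" "\<forall>j\<in>J. 0 \<le> c (Inr j)" using c(2) by auto
    ultimately show "x \<in> gen_set I u J v X0" using c(3) by (simp add: gen_setI)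
  qed
qed

lemma affine_slice:
  fixes L :: "('a::real_vector \<times> 'b::real_vector) set"
  assumes "subspace L"
  shows "affine ((\<lambda>x. (x, c)) -` L)"
  unfolding affine_def
proof (intro ballI allI impI)
  fix x y :: 'a and a b :: real
  assume "x \<in> (\<lambda>x. (x, c)) -` L" "y \<in> (\<lambda>x. (x, c)) -` L" "a + b = 1"
  then have "a *\<^sub>R (x, c) + b *\<^sub>R (y, c) \<in> L"
    using assms by (intro subspace_add subspace_scale) auto
  moreover have "a *\<^sub>R (x, c) + b *\<^sub>R (y, c) = (a *\<^sub>R x + b *\<^sub>R y, c)"
    using \<open>a + b = 1\<close> by (simp flip: scaleR_add_left)
  ultimately show "a *\<^sub>R x + b *\<^sub>R y \<in> (\<lambda>x. (x, c)) -` L" by simp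
qed

lemma gen_polyhedral_slice:
  fixes C :: "('a::{real_vector,topological_space} \<times> real) set"
  assumes "polyhedral_cone C"
  shows "gen_polyhedral {x. (x, 1) \<in> C}"
proof -
  obtain G L where G: "finite G" "\<forall>g\<in>G. dual_elem g" and L: "closed L" "subspace L"
    and C: "C = {q \<in> L. \<forall>g\<in>G. g q \<le> 0}"
    using assms unfolding polyhedral_cone_def by blast
  define n where "n = card G"
  obtain gs where "bij_betw gs {1..n} G" unfolding n_def using ex_bij_betw_nat_finite_1[OF G(1)] ..
  then have gs: "gs ` {1..n} = G" by (rule bij_betw_imp_surj_on)
  define xs where "xs i = gs i \<circ> (\<lambda>x. (x, 0::real))" for i
  define \<alpha> where "\<alpha> i = - gs i (0, 1)" for i
  define L1 where "L1 = (\<lambda>x. (x, 1::real)) -` L"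
  have "linear (\<lambda>x::'a. (x, 0::real))" by (rule linearI) simp_all
  then have "dual_elem (xs i)" if "i \<in> {1..n}" for i
    unfolding xs_def using G(2) gs that by (intro dual_elem_compose continuous_intros) auto
  moreover have "closed L1" unfolding L1_def by (intro closed_vimage[OF L(1)] continuous_intros)
  moreover have "affine L1" unfolding L1_def by (rule affine_slice[OF L(2)])
  moreover have "{x. (x, 1) \<in> C} = {x \<in> L1. \<forall>i\<in>{1..n}. xs i x \<le> \<alpha> i}"
  proof -
    have split: "g (x, 1) = g (x, 0) + g (0, 1)" if "g \<in> G" for g and x :: 'a
      using G(2) that linear_add[of g "(x, 0)" "(0, 1)"] unfolding dual_elem_def by simp
    have "(\<forall>g\<in>G. g (x, 1) \<le> 0) \<longleftrightarrow> (\<forall>i\<in>{1..n}. gs i (x, 1) \<le> 0)" for x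
      unfolding gs[symmetric] by simp
    also have "\<dots> x \<longleftrightarrow> (\<forall>i\<in>{1..n}. xs i x \<le> \<alpha> i)" for x
    proof -
      have "gs i (x, 1) \<le> 0 \<longleftrightarrow> xs i x \<le> \<alpha> i" if "i \<in> {1..n}" for i
        using split[of "gs i" x] imageI[OF that, of gs] unfolding gs xs_def \<alpha>_def by simp arith
      then show ?thesis by blast
    qed
    finally show ?thesis unfolding C L1_def by auto
  qed
  ultimately show ?thesis
    unfolding gen_polyhedral_def by (intro exI[of _ n] exI[of _ xs] exI[of _ \<alpha>] exI[of _ L1]) simp
qed

lemma gen_polyhedral_gen_set:
  fixes u v :: "nat \<Rightarrow> 'a::{real_vector,topological_space}"
  assumes "lc_tvs TYPE('a)" "finite I" "finite J" "subspace X0" "closed X0"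
  shows "gen_polyhedral (gen_set I u J v X0)"
proof -
  have "polyhedral_cone
      (generated_cone (X0 \<times> {0}) (I <+> J) (case_sum (\<lambda>i. (u i, 1::real)) (\<lambda>j. (v j, 0))))"
    using assms by (intro polyhedral_cone_generated_cone lc_tvs_prod lc_tvs_real_normed_vector
        closed_Times subspace_Times) simp_all
  then show ?thesis
    unfolding gen_set_eq_slice[OF assms(2,3)] by (rule gen_polyhedral_slice)
qed

section \<open>Minimizing a linear functional over \<open>gen_set\<close>\<close>

lemma linear_gen_set_combination:
  assumes "linear f"
  shows "f ((\<Sum>i\<in>I. lam i *\<^sub>R u i) + (\<Sum>j\<in>J. mu j *\<^sub>R v j) + z)
       = (\<Sum>i\<in>I. lam i * f (u i)) + (\<Sum>j\<in>J. mu j * f (v j)) + f z"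
  by (simp add: linear_add[OF assms] linear_sum[OF assms] linear_scale[OF assms])

lemma gen_set_add_subspace:
  assumes "x \<in> gen_set I u J v X0" "subspace X0" "z \<in> X0"
  shows "x + z \<in> gen_set I u J v X0"
proof -
  obtain lam mu z0 where x: "x = (\<Sum>i\<in>I. lam i *\<^sub>R u i) + (\<Sum>j\<in>J. mu j *\<^sub>R v j) + z0"
    "\<forall>i\<in>I. 0 \<le> lam i" "(\<Sum>i\<in>I. lam i) = 1" "\<forall>j\<in>J. 0 \<le> mu j" "z0 \<in> X0"
    using assms(1) by (rule gen_setE)
  then have "(\<Sum>i\<in>I. lam i *\<^sub>R u i) + (\<Sum>j\<in>J. mu j *\<^sub>R v j) + (z0 + z) \<in> gen_set I u J v X0"
    using assms(2,3) by (intro gen_setI) (simp_all add: subspace_add)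
  then show ?thesis using x(1) by (simp add: add.assoc)
qed

lemma gen_set_add_direction:
  assumes "x \<in> gen_set I u J v X0" "finite J" "j \<in> J"
  shows "x + v j \<in> gen_set I u J v X0"
proof -
  obtain lam mu z where x: "x = (\<Sum>i\<in>I. lam i *\<^sub>R u i) + (\<Sum>j\<in>J. mu j *\<^sub>R v j) + z"
    "\<forall>i\<in>I. 0 \<le> lam i" "(\<Sum>i\<in>I. lam i) = 1" "\<forall>j\<in>J. 0 \<le> mu j" "z \<in> X0"
    using assms(1) by (rule gen_setE)
  define mu' where "mu' = mu(j := mu j + 1)"
  have "(\<Sum>j'\<in>J. mu' j' *\<^sub>R v j') = (\<Sum>j'\<in>J. mu j' *\<^sub>R v j') + v j"
    using assms(2,3) by (simp add: mu'_def sum.remove scaleR_add_left algebra_simps)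
  moreover have "(\<Sum>i\<in>I. lam i *\<^sub>R u i) + (\<Sum>j'\<in>J. mu' j' *\<^sub>R v j') + z \<in> gen_set I u J v X0"
    using x(2-5) by (intro gen_setI) (simp_all add: mu'_def)
  ultimately show ?thesis using x(1) by (simp add: algebra_simps)
qed

lemma gen_set_vertex:
  assumes "finite I" "i \<in> I" "subspace X0"
  shows "u i \<in> gen_set I u J v X0"
proof -
  define lam where "lam i' = (if i' = i then 1 else 0 :: real)" for i'
  have "(\<Sum>i'\<in>I. lam i' *\<^sub>R u i') + (\<Sum>j\<in>J. 0 *\<^sub>R v j) + 0 \<in> gen_set I u J v X0"
    using assms by (intro gen_setI) (simp_all add: lam_def subspace_0)
  moreover have "(\<Sum>i'\<in>I. lam i' *\<^sub>R u i') = u i"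
    using assms(1,2) by (simp add: lam_def if_distrib[of "\<lambda>c. c *\<^sub>R _"] cong: if_cong)
  ultimately show ?thesis by simp
qed

lemma gen_set_mono:
  assumes "I' \<subseteq> I" "J' \<subseteq> J" "finite I" "finite J"
  shows "gen_set I' u J' v X0 \<subseteq> gen_set I u J v X0"
proof
  fix x assume "x \<in> gen_set I' u J' v X0"
  then obtain lam mu z where x: "x = (\<Sum>i\<in>I'. lam i *\<^sub>R u i) + (\<Sum>j\<in>J'. mu j *\<^sub>R v j) + z"
    "\<forall>i\<in>I'. 0 \<le> lam i" "(\<Sum>i\<in>I'. lam i) = 1" "\<forall>j\<in>J'. 0 \<le> mu j" "z \<in> X0"
    by (rule gen_setE)
  define lam' mu' where "lam' i = (if i \<in> I' then lam i else 0)" and "mu' j = (if j \<in> J' then mu j else 0)"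
    for i j
  have "(\<Sum>i\<in>I. lam' i *\<^sub>R u i) = (\<Sum>i\<in>I'. lam i *\<^sub>R u i)" "(\<Sum>i\<in>I. lam' i) = (\<Sum>i\<in>I'. lam i)"
    "(\<Sum>j\<in>J. mu' j *\<^sub>R v j) = (\<Sum>j\<in>J'. mu j *\<^sub>R v j)"
    using assms by (simp_all add: lam'_def mu'_def if_distrib[of "\<lambda>c. c *\<^sub>R _"] sum.If_cases Int_absorb1 cong: if_cong)
  moreover have "(\<Sum>i\<in>I. lam' i *\<^sub>R u i) + (\<Sum>j\<in>J. mu' j *\<^sub>R v j) + z \<in> gen_set I u J v X0"
    using x(2-5) calculation(2) by (intro gen_setI) (simp_all add: lam'_def mu'_def)
  ultimately show "x \<in> gen_set I u J v X0" using x(1) by simp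
qed

lemma linear_minimizer_line:
  fixes f :: "'a::real_vector \<Rightarrow> real"
  assumes "linear f" "x \<in> S" "\<forall>y\<in>S. f x \<le> f y" "\<And>c. x + c *\<^sub>R z \<in> S"
  shows "f z = 0"
proof -
  have "f x \<le> f (x + (- f z) *\<^sub>R z)" using assms(3,4) by blast
  then have "f z * f z \<le> 0" using assms(1) by (simp add: linear_diff linear_scale)
  then show ?thesis by (metis mult_eq_0_iff not_square_less_zero order_le_less)
qed

lemma gen_set_excess:
  fixes f :: "'a::real_vector \<Rightarrow> real"
  assumes f: "linear f" "\<And>z. z \<in> X0 \<Longrightarrow> f z = 0" and "(\<Sum>i\<in>I. lam i) = 1" "z \<in> X0"
  shows "f ((\<Sum>i\<in>I. lam i *\<^sub>R u i) + (\<Sum>j\<in>J. mu j *\<^sub>R v j) + z) - m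
       = (\<Sum>i\<in>I. lam i * (f (u i) - m)) + (\<Sum>j\<in>J. mu j * f (v j))"
proof -
  have "(\<Sum>i\<in>I. lam i * (f (u i) - m)) = (\<Sum>i\<in>I. lam i * f (u i)) - m"
    using assms(3) by (simp add: right_diff_distrib sum_subtractf sum_distrib_right[symmetric])
  then show ?thesis using linear_gen_set_combination[OF f(1), of lam u I mu v J z] f(2)[OF assms(4)] by simp
qed

lemma gen_set_value_ge:
  fixes f :: "'a::real_vector \<Rightarrow> real"
  assumes f: "linear f" "\<And>z. z \<in> X0 \<Longrightarrow> f z = 0" "\<And>j. j \<in> J \<Longrightarrow> 0 \<le> f (v j)"
    and m: "\<And>i. i \<in> I \<Longrightarrow> m \<le> f (u i)" and x: "x \<in> gen_set I u J v X0"
  shows "m \<le> f x"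
proof -
  obtain lam mu z where x: "x = (\<Sum>i\<in>I. lam i *\<^sub>R u i) + (\<Sum>j\<in>J. mu j *\<^sub>R v j) + z"
    "\<forall>i\<in>I. 0 \<le> lam i" "(\<Sum>i\<in>I. lam i) = 1" "\<forall>j\<in>J. 0 \<le> mu j" "z \<in> X0"
    using x by (rule gen_setE)
  have "f x - m = (\<Sum>i\<in>I. lam i * (f (u i) - m)) + (\<Sum>j\<in>J. mu j * f (v j))"
    unfolding x(1) by (rule gen_set_excess[OF f(1,2) x(3,5)])
  moreover have "0 \<le> (\<Sum>i\<in>I. lam i * (f (u i) - m)) + (\<Sum>j\<in>J. mu j * f (v j))"
    using x(2,4) m f(3) by (intro add_nonneg_nonneg sum_nonneg) simp_all
  ultimately show ?thesis by linarith
qed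

text \<open>A point of the minimal level carries no weight on non-minimal vertices and on directions
  along which \<open>f\<close> increases, since every term of the excess is nonnegative.\<close>
lemma gen_set_level_subset:
  fixes f :: "'a::real_vector \<Rightarrow> real"
  assumes f: "linear f" "\<And>z. z \<in> X0 \<Longrightarrow> f z = 0" "\<And>j. j \<in> J \<Longrightarrow> 0 \<le> f (v j)"
    and IJ: "finite I" "finite J" and m: "\<And>i. i \<in> I \<Longrightarrow> m \<le> f (u i)"
    and x: "x \<in> gen_set I u J v X0" "f x = m"
  shows "x \<in> gen_set {i \<in> I. f (u i) = m} u {j \<in> J. f (v j) = 0} v X0"
proof -
  obtain lam mu z where x': "x = (\<Sum>i\<in>I. lam i *\<^sub>R u i) + (\<Sum>j\<in>J. mu j *\<^sub>R v j) + z"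
    "\<forall>i\<in>I. 0 \<le> lam i" "(\<Sum>i\<in>I. lam i) = 1" "\<forall>j\<in>J. 0 \<le> mu j" "z \<in> X0"
    using x(1) by (rule gen_setE)
  have nonneg: "\<forall>i\<in>I. 0 \<le> lam i * (f (u i) - m)" "\<forall>j\<in>J. 0 \<le> mu j * f (v j)"
    using x'(2,4) m f(3) by simp_all
  have "f x - m = (\<Sum>i\<in>I. lam i * (f (u i) - m)) + (\<Sum>j\<in>J. mu j * f (v j))"
    unfolding x'(1) by (rule gen_set_excess[OF f(1,2) x'(3,5)])
  then have "(\<Sum>i\<in>I. lam i * (f (u i) - m)) + (\<Sum>j\<in>J. mu j * f (v j)) = 0"
    using x(2) by simp
  moreover have "0 \<le> (\<Sum>i\<in>I. lam i * (f (u i) - m))" "0 \<le> (\<Sum>j\<in>J. mu j * f (v j))"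
    using nonneg by (simp_all add: sum_nonneg)
  ultimately have "(\<Sum>i\<in>I. lam i * (f (u i) - m)) = 0" "(\<Sum>j\<in>J. mu j * f (v j)) = 0"
    by linarith+
  then have lam0: "\<forall>i\<in>I. lam i * (f (u i) - m) = 0" and mu0: "\<forall>j\<in>J. mu j * f (v j) = 0"
    using nonneg IJ by (simp_all add: sum_nonneg_eq_0_iff)
  define I0 J0 where "I0 = {i \<in> I. f (u i) = m}" and "J0 = {j \<in> J. f (v j) = 0}"
  have "(\<Sum>i\<in>I. lam i *\<^sub>R u i) = (\<Sum>i\<in>I0. lam i *\<^sub>R u i)" "(\<Sum>i\<in>I. lam i) = (\<Sum>i\<in>I0. lam i)"
    "(\<Sum>j\<in>J. mu j *\<^sub>R v j) = (\<Sum>j\<in>J0. mu j *\<^sub>R v j)"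
    using IJ lam0 mu0 unfolding I0_def J0_def by (auto intro!: sum.mono_neutral_right)
  moreover have "(\<Sum>i\<in>I0. lam i *\<^sub>R u i) + (\<Sum>j\<in>J0. mu j *\<^sub>R v j) + z \<in> gen_set I0 u J0 v X0"
    using x'(2-5) calculation(2) unfolding I0_def J0_def by (intro gen_setI) simp_all
  ultimately show ?thesis using x'(1) unfolding I0_def J0_def by simp
qed

lemma gen_set_value_on_level:
  fixes f :: "'a::real_vector \<Rightarrow> real"
  assumes f: "linear f" "\<And>z. z \<in> X0 \<Longrightarrow> f z = 0"
    and x: "x \<in> gen_set {i \<in> I. f (u i) = m} u {j \<in> J. f (v j) = 0} v X0"
  shows "f x = m"
proof -
  obtain lam mu z where x': "x = (\<Sum>i\<in>{i \<in> I. f (u i) = m}. lam i *\<^sub>R u i) + (\<Sum>j\<in>{j \<in> J. f (v j) = 0}. mu j *\<^sub>R v j) + z"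
    "(\<Sum>i\<in>{i \<in> I. f (u i) = m}. lam i) = 1" "z \<in> X0"
    using x by (rule gen_setE)
  have "f x - m = (\<Sum>i\<in>{i \<in> I. f (u i) = m}. lam i * (f (u i) - m))
      + (\<Sum>j\<in>{j \<in> J. f (v j) = 0}. mu j * f (v j))"
    unfolding x'(1) by (rule gen_set_excess[OF f x'(2,3)])
  then show ?thesis by simp
qed

lemma gen_set_argmin:
  fixes f :: "'a::real_vector \<Rightarrow> real"
  assumes f: "linear f" "\<And>z. z \<in> X0 \<Longrightarrow> f z = 0" "\<And>j. j \<in> J \<Longrightarrow> 0 \<le> f (v j)"
    and IJ: "finite I" "I \<noteq> {}" "finite J" and X0: "subspace X0"
  shows "{x \<in> gen_set I u J v X0. \<forall>y\<in>gen_set I u J v X0. f x \<le> f y}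
       = gen_set {i0 \<in> I. \<forall>i\<in>I. f (u i0) \<le> f (u i)} u {j0 \<in> J. f (v j0) = 0} v X0"
proof -
  define m where "m = Min (f ` u ` I)"
  have m_le: "m \<le> f (u i)" if "i \<in> I" for i unfolding m_def using IJ(1) that by simp
  have "m \<in> f ` u ` I" unfolding m_def using IJ(1,2) by (intro Min_in) auto
  then obtain i0 where i0: "i0 \<in> I" "f (u i0) = m" by auto
  have I0: "{i0 \<in> I. \<forall>i\<in>I. f (u i0) \<le> f (u i)} = {i \<in> I. f (u i) = m}"
    using m_le i0 by (auto intro: antisym)
  have face: "gen_set {i \<in> I. f (u i) = m} u {j \<in> J. f (v j) = 0} v X0 \<subseteq> gen_set I u J v X0"
    by (rule gen_set_mono) (use IJ in auto)
  have level: "x \<in> gen_set I u J v X0 \<and> f x = m \<longleftrightarrow>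
      x \<in> gen_set {i \<in> I. f (u i) = m} u {j \<in> J. f (v j) = 0} v X0" for x
  proof
    assume x: "x \<in> gen_set I u J v X0 \<and> f x = m"
    show "x \<in> gen_set {i \<in> I. f (u i) = m} u {j \<in> J. f (v j) = 0} v X0"
      by (rule gen_set_level_subset[OF f IJ(1,3) m_le]) (use x in auto)
  next
    assume x: "x \<in> gen_set {i \<in> I. f (u i) = m} u {j \<in> J. f (v j) = 0} v X0"
    show "x \<in> gen_set I u J v X0 \<and> f x = m"
      using face x gen_set_value_on_level[OF f(1,2) x] by blast
  qed
  have vertex: "u i0 \<in> gen_set I u J v X0" by (rule gen_set_vertex[OF IJ(1) i0(1) X0])
  have "x \<in> gen_set I u J v X0 \<and> (\<forall>y\<in>gen_set I u J v X0. f x \<le> f y) \<longleftrightarrow>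
      x \<in> gen_set I u J v X0 \<and> f x = m" for x
  proof
    assume x: "x \<in> gen_set I u J v X0 \<and> (\<forall>y\<in>gen_set I u J v X0. f x \<le> f y)"
    then have "f x \<le> m" using vertex i0(2) by force
    then show "x \<in> gen_set I u J v X0 \<and> f x = m"
      using x gen_set_value_ge[OF f m_le, where x=x] by simp
  next
    assume "x \<in> gen_set I u J v X0 \<and> f x = m"
    then show "x \<in> gen_set I u J v X0 \<and> (\<forall>y\<in>gen_set I u J v X0. f x \<le> f y)"
      using gen_set_value_ge[OF f m_le] by simp
  qed
  then show ?thesis unfolding I0 using level by blast
qed

theorem proposition3p6:
  fixes u v :: "nat \<Rightarrow> 'a::{real_vector, t2_space}"
    and k l :: nat
    and X0 :: "'a set"
    and f :: "'a \<Rightarrow> real"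
  assumes X: "lc_tvs TYPE('a)"
    and k: "k \<ge> 1"
    and X0: "subspace X0" "closed X0"
    and D_ne: "gen_set {1..k} u {1..l} v X0 \<noteq> {}"
    and f: "dual_elem f"
    and sol: "\<exists>x\<in>gen_set {1..k} u {1..l} v X0. \<forall>y\<in>gen_set {1..k} u {1..l} v X0. f x \<le> f y"
  shows "{x \<in> gen_set {1..k} u {1..l} v X0. \<forall>y\<in>gen_set {1..k} u {1..l} v X0. f x \<le> f y}
           = gen_set {i0 \<in> {1..k}. \<forall>i\<in>{1..k}. f (u i0) \<le> f (u i)} u
                     {j0 \<in> {1..l}. f (v j0) = 0} v X0
       \<and> gen_polyhedral
           {x \<in> gen_set {1..k} u {1..l} v X0. \<forall>y\<in>gen_set {1..k} u {1..l} v X0. f x \<le> f y}"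
proof -
  obtain x0 where x0: "x0 \<in> gen_set {1..k} u {1..l} v X0" "\<forall>y\<in>gen_set {1..k} u {1..l} v X0. f x0 \<le> f y"
    using sol by blast
  have lin: "linear f" using f unfolding dual_elem_def by blast
  have "f z = 0" if "z \<in> X0" for z
    using linear_minimizer_line[OF lin x0] gen_set_add_subspace[OF x0(1) X0(1)] subspace_scale[OF X0(1) that]
    by blast
  moreover have "0 \<le> f (v j)" if "j \<in> {1..l}" for j
  proof -
    have "f x0 \<le> f (x0 + v j)" using x0(2) gen_set_add_direction[OF x0(1) _ that] by simp
    then show ?thesis by (simp add: linear_add[OF lin])
  qed
  ultimately have argmin:
    "{x \<in> gen_set {1..k} u {1..l} v X0. \<forall>y\<in>gen_set {1..k} u {1..l} v X0. f x \<le> f y}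
       = gen_set {i0 \<in> {1..k}. \<forall>i\<in>{1..k}. f (u i0) \<le> f (u i)} u {j0 \<in> {1..l}. f (v j0) = 0} v X0"
    using k by (intro gen_set_argmin[OF lin _ _ _ _ _ X0(1)]) auto
  have "gen_polyhedral (gen_set {i0 \<in> {1..k}. \<forall>i\<in>{1..k}. f (u i0) \<le> f (u i)} u {j0 \<in> {1..l}. f (v j0) = 0} v X0)"
    using X X0 by (intro gen_polyhedral_gen_set) auto
  with argmin show ?thesis by simp
qed

end
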